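(* Let $X$ be a finite set, $t_1<\dots<t_M$ real numbers and $(\mathcal{P}^{t_m})_{m\le M}$ partitions of $X$. Then the persistent hierarchy satisfies $h(t)=1$ for all $t\ge t_1$ if and only if the sequence is strictly hierarchical, i.e. $\mathcal{P}^{t_1}\le\mathcal{P}^{t_2}\le\dots\le\mathcal{P}^{t_M}$.
   Context: A partition of $X$ is a collection of non-empty pairwise disjoint subsets (clusters) whose union is $X$; $\#\mathcal{P}$ is its number of clusters. $\mathcal{P}\le\mathcal{Q}$ means every cluster of $\mathcal{P}$ is contained in a cluster of $\mathcal{Q}$. For a finite non-empty set $C$, $\Delta C$ is the set of all non-empty subsets of $C$. The Multiscale Clustering Filtration is $K^{t_m}:=\bigcup_{l\le m}\bigcup_{C\in\mathcal{P}^{t_l}}\Delta C$. For $t\ge t_1$, let $m$ be the largest index with $t_m\le t$ and set $\mathcal{P}^t:=\mathcal{P}^{t_m}$, $K^t:=K^{t_m}$. Let $\beta_0^t$ be the number of connected components of $K^t$ (rank of $H_0(K^t)$). The persistent hierarchy is $h(t):=\beta_0^t/\#\mathcal{P}^t$ for $t\ge t_1$. *)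

theory Defs
  imports Complex_Main
begin

definition is_partition :: "'a set \<Rightarrow> 'a set set \<Rightarrow> bool" where
  "is_partition X P \<longleftrightarrow> (\<forall>C\<in>P. C \<noteq> {}) \<and>
     (\<forall>C\<in>P. \<forall>D\<in>P. C \<noteq> D \<longrightarrow> C \<inter> D = {}) \<and> \<Union>P = X"

definition refines :: "'a set set \<Rightarrow> 'a set set \<Rightarrow> bool" where
  "refines P Q \<longleftrightarrow> (\<forall>C\<in>P. \<exists>D\<in>Q. C \<subseteq> D)"

definition Delta :: "'a set \<Rightarrow> 'a set set" where
  "Delta C = {S. S \<subseteq> C \<and> S \<noteq> {}}"

text \<open>Multiscale Clustering Filtration at index m (indices 1..M).\<close>
definition mcf :: "(nat \<Rightarrow> 'a set set) \<Rightarrow> nat \<Rightarrow> 'a set set" where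
  "mcf P m = (\<Union>l\<in>{1..m}. \<Union>C\<in>P l. Delta C)"

text \<open>Connected components of a simplicial complex K (given as a set of simplices):
  equivalence classes of vertices under the transitive closure of
  "lying in a common simplex".\<close>
definition simplex_adj :: "'a set set \<Rightarrow> ('a \<times> 'a) set" where
  "simplex_adj K = {(x, y). \<exists>\<sigma>\<in>K. x \<in> \<sigma> \<and> y \<in> \<sigma>}"

definition betti0 :: "'a set set \<Rightarrow> nat" where
  "betti0 K = card ((\<Union>K) // trancl (simplex_adj K))"

text \<open>For t \<ge> t_1: the largest index m \<le> M with t_m \<le> t.\<close>
definition scale_index :: "(nat \<Rightarrow> real) \<Rightarrow> nat \<Rightarrow> real \<Rightarrow> nat" where
  "scale_index tt M t = (GREATEST m. m \<in> {1..M} \<and> tt m \<le> t)"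

definition persistent_hierarchy ::
  "(nat \<Rightarrow> 'a set set) \<Rightarrow> (nat \<Rightarrow> real) \<Rightarrow> nat \<Rightarrow> real \<Rightarrow> real" where
  "persistent_hierarchy P tt M t =
     (let m = scale_index tt M t in real (betti0 (mcf P m)) / real (card (P m)))"

end

theory Submission
  imports
    "HOL-Library.Disjoint_Sets"
    Defs  (* imported last, so that refines means Defs.refines, not Disjoint_Sets.refines *)
begin

(* The connected components of K^{t_n} are the classes of the equivalence relation generated
   by the cluster relations of P^{t_1}, ..., P^{t_n}. It is coarser than the cluster relation
   of P^{t_n}, so beta_0 <= #P^{t_n}, with equality exactly when the two relations coincide,
   i.e. when every earlier partition refines P^{t_n}. Every index n is attained at t = t_n,
   so h = 1 throughout iff P^{t_l} refines P^{t_n} whenever l <= n, and by transitivity of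
   refinement it suffices to compare consecutive partitions. *)

lemma is_partition_iff_partition_on: "is_partition X P \<longleftrightarrow> partition_on X P"
  unfolding is_partition_def partition_on_def disjoint_def by blast

lemma equiv_simplex_adj_partition:
  "is_partition X P \<Longrightarrow> equiv X (simplex_adj P)"
  unfolding simplex_adj_def is_partition_iff_partition_on by (rule equiv_partition_on)

lemma quotient_simplex_adj_partition:
  "is_partition X P \<Longrightarrow> X // simplex_adj P = P"
  unfolding simplex_adj_def is_partition_iff_partition_on by (rule partition_on_eq_quotient)

lemma refines_iff_simplex_adj_subset:
  assumes P: "is_partition X P" and Q: "is_partition X Q"
  shows "refines P Q \<longleftrightarrow> simplex_adj P \<subseteq> simplex_adj Q"
proof
  assume "refines P Q"
  show "simplex_adj P \<subseteq> simplex_adj Q"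
  proof
    fix p assume "p \<in> simplex_adj P"
    then obtain x y C where "p = (x, y)" "C \<in> P" "x \<in> C" "y \<in> C"
      unfolding simplex_adj_def by auto
    moreover obtain D where "D \<in> Q" "C \<subseteq> D"
      using \<open>refines P Q\<close> \<open>C \<in> P\<close> unfolding refines_def by auto
    ultimately show "p \<in> simplex_adj Q"
      unfolding simplex_adj_def by auto
  qed
next
  assume adj: "simplex_adj P \<subseteq> simplex_adj Q"
  show "refines P Q"
    unfolding refines_def
  proof
    fix C assume "C \<in> P"
    then have "C \<noteq> {}" "C \<subseteq> X"
      using P unfolding is_partition_def by auto
    then obtain x where "x \<in> C" "x \<in> X" by auto
    have "C \<subseteq> simplex_adj P `` {x}"
      using \<open>C \<in> P\<close> \<open>x \<in> C\<close> unfolding simplex_adj_def by auto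
    also have "\<dots> \<subseteq> simplex_adj Q `` {x}"
      using adj by auto
    finally have "C \<subseteq> simplex_adj Q `` {x}" .
    moreover have "simplex_adj Q `` {x} \<in> Q"
      using quotientI[OF \<open>x \<in> X\<close>, of "simplex_adj Q"] quotient_simplex_adj_partition[OF Q] by simp
    ultimately show "\<exists>D\<in>Q. C \<subseteq> D" by auto
  qed
qed

lemma refines_self: "refines P P"
  unfolding refines_def by blast

lemma refines_trans: "refines P Q \<Longrightarrow> refines Q R \<Longrightarrow> refines P R"
  unfolding refines_def by (meson order_trans)

lemma refines_chain_iff:
  "(\<forall>m. 1 \<le> m \<longrightarrow> m < M \<longrightarrow> refines (P m) (P (Suc m))) \<longleftrightarrow>
   (\<forall>n\<in>{1..M}. \<forall>l\<in>{1..n}. refines (P l) (P n))"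
proof
  assume succ: "\<forall>m. 1 \<le> m \<longrightarrow> m < M \<longrightarrow> refines (P m) (P (Suc m))"
  show "\<forall>n\<in>{1..M}. \<forall>l\<in>{1..n}. refines (P l) (P n)"
  proof (intro ballI)
    fix n l assume n: "n \<in> {1..M}" and l: "l \<in> {1..n}"
    from l have "l \<le> n" by simp
    then show "refines (P l) (P n)"
    proof (induction n rule: dec_induct)
      case base
      show ?case by (rule refines_self)
    next
      case (step k)
      have "refines (P k) (P (Suc k))"
        using succ l n step.hyps by simp
      with step.IH show ?case by (rule refines_trans)
    qed
  qed
qed (simp add: Suc_leI)

lemma equiv_trancl_UN:
  assumes equiv: "\<And>i. i \<in> I \<Longrightarrow> equiv A (E i)" and "I \<noteq> {}"
  shows "equiv A ((\<Union>i\<in>I. E i)\<^sup>+)"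
proof (rule equivI)
  obtain i where "i \<in> I" using \<open>I \<noteq> {}\<close> by blast
  have "refl_on A (E i)" using equiv[OF \<open>i \<in> I\<close>] by (rule equivE)
  then show "refl_on A ((\<Union>i\<in>I. E i)\<^sup>+)"
    using \<open>i \<in> I\<close> unfolding refl_on_def by blast
  show "(\<Union>i\<in>I. E i)\<^sup>+ \<subseteq> A \<times> A"
    using equiv by (intro trancl_subset_Sigma) (auto dest: equiv_type)
  show "sym ((\<Union>i\<in>I. E i)\<^sup>+)"
    using equiv by (intro sym_trancl sym_UNION) (simp add: equiv_def)
qed (rule trans_trancl)

lemma card_quotient_eq_iff:
  assumes "finite A" and E: "equiv A E" and R: "equiv A R" and "E \<subseteq> R"
  shows "card (A // R) = card (A // E) \<longleftrightarrow> R = E"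
proof
  assume "card (A // R) = card (A // E)"
  then have inj: "inj_on (\<lambda>C. R `` C) (A // E)"
    using refines_equiv_image_eq[OF \<open>E \<subseteq> R\<close> E R] finite_quotient[OF \<open>finite A\<close> equiv_type[OF E]]
    by (metis eq_card_imp_inj_on)
  have "R \<subseteq> E"
  proof safe
    fix x y assume "(x, y) \<in> R"
    then have "x \<in> A" "y \<in> A" "R `` {x} = R `` {y}"
      using equiv_class_eq_iff[OF R] by blast+
    then have "R `` (E `` {x}) = R `` (E `` {y})"
      using refines_equiv_class_eq2[OF \<open>E \<subseteq> R\<close> E R] by simp
    then have "E `` {x} = E `` {y}"
      using inj_onD[OF inj] quotientI[OF \<open>x \<in> A\<close>] quotientI[OF \<open>y \<in> A\<close>] by blast
    then show "(x, y) \<in> E"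
      using eq_equiv_class_iff[OF E \<open>x \<in> A\<close> \<open>y \<in> A\<close>] by simp
  qed
  then show "R = E" using \<open>E \<subseteq> R\<close> by blast
qed simp

lemma simplex_adj_mcf: "simplex_adj (mcf P n) = (\<Union>l\<in>{1..n}. simplex_adj (P l))"
  unfolding simplex_adj_def mcf_def Delta_def by blast

lemma Union_mcf:
  assumes "1 \<le> n" and "\<And>l. l \<in> {1..n} \<Longrightarrow> is_partition X (P l)"
  shows "\<Union>(mcf P n) = X"
  using assms unfolding mcf_def Delta_def is_partition_def by fastforce

lemma betti0_mcf_eq_card_iff:
  assumes "finite X" and "1 \<le> n" and part: "\<And>l. l \<in> {1..n} \<Longrightarrow> is_partition X (P l)"
  shows "betti0 (mcf P n) = card (P n) \<longleftrightarrow> (\<forall>l\<in>{1..n}. refines (P l) (P n))"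
proof -
  let ?E = "\<lambda>l. simplex_adj (P l)"
  let ?R = "(\<Union>l\<in>{1..n}. ?E l)\<^sup>+"
  have n: "n \<in> {1..n}" using \<open>1 \<le> n\<close> by simp
  have E_equiv: "equiv X (?E l)" if "l \<in> {1..n}" for l
    using part[OF that] by (rule equiv_simplex_adj_partition)
  have "equiv X ?R" by (rule equiv_trancl_UN) (use E_equiv n in auto)
  have E_sub_R: "?E l \<subseteq> ?R" if "l \<in> {1..n}" for l
    using that trancl_incr by fast
  have "trans (?E n)" using E_equiv[OF n] by (rule equivE)
  have "betti0 (mcf P n) = card (X // ?R)"
    using Union_mcf[OF \<open>1 \<le> n\<close> part] unfolding betti0_def simplex_adj_mcf by simp
  moreover have "card (P n) = card (X // ?E n)"
    using quotient_simplex_adj_partition[OF part[OF n]] by simp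
  ultimately have "betti0 (mcf P n) = card (P n) \<longleftrightarrow> card (X // ?R) = card (X // ?E n)"
    by simp
  also have "\<dots> \<longleftrightarrow> ?R = ?E n"
    by (rule card_quotient_eq_iff[OF \<open>finite X\<close> E_equiv[OF n] \<open>equiv X ?R\<close> E_sub_R[OF n]])
  also have "\<dots> \<longleftrightarrow> (\<forall>l\<in>{1..n}. ?E l \<subseteq> ?E n)"
  proof
    assume "\<forall>l\<in>{1..n}. ?E l \<subseteq> ?E n"
    then have "?R \<subseteq> (?E n)\<^sup>+" by (intro trancl_mono_subset) blast
    then show "?R = ?E n"
      using E_sub_R[OF n] trancl_id[OF \<open>trans (?E n)\<close>] by simp
  qed (use E_sub_R in simp)
  also have "\<dots> \<longleftrightarrow> (\<forall>l\<in>{1..n}. refines (P l) (P n))"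
    using refines_iff_simplex_adj_subset[OF part part[OF n]] by simp
  finally show ?thesis .
qed

lemma scale_index_at:
  assumes "strict_mono_on {1..M} tt" and "k \<in> {1..M}"
  shows "scale_index tt M (tt k) = k"
  unfolding scale_index_def
proof (rule Greatest_equality)
  show "k \<in> {1..M} \<and> tt k \<le> tt k" using assms(2) by simp
  show "m \<le> k" if "m \<in> {1..M} \<and> tt m \<le> tt k" for m
    using strict_mono_on_less_eq[OF assms(1) _ assms(2), of m] that by blast
qed

lemma scale_index_mem:
  assumes "1 \<le> M" and "tt 1 \<le> t"
  shows "scale_index tt M t \<in> {1..M}"
proof -
  let ?admissible = "\<lambda>m. m \<in> {1..M} \<and> tt m \<le> t"
  have "?admissible (Greatest ?admissible)"
    by (rule GreatestI_nat[where k = 1 and b = M]) (use assms in auto)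
  then show ?thesis
    unfolding scale_index_def by (rule conjunct1)
qed

lemma scale_index_image:
  assumes "1 \<le> M" and "strict_mono_on {1..M} tt"
  shows "scale_index tt M ` {tt 1..} = {1..M}"
proof
  show "scale_index tt M ` {tt 1..} \<subseteq> {1..M}"
    using scale_index_mem[OF \<open>1 \<le> M\<close>] by auto
  show "{1..M} \<subseteq> scale_index tt M ` {tt 1..}"
  proof
    fix k assume k: "k \<in> {1..M}"
    have "tt 1 \<le> tt k"
      using strict_mono_on_less_eq[OF assms(2) _ k, of 1] k \<open>1 \<le> M\<close> by simp
    then have "tt k \<in> {tt 1..}" by simp
    then show "k \<in> scale_index tt M ` {tt 1..}"
      using scale_index_at[OF assms(2) k] by (metis image_eqI)
  qed
qed

lemma persistent_hierarchy_eq_1_iff: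
  assumes "finite X" and "X \<noteq> {}" and "is_partition X (P (scale_index tt M t))"
  shows "persistent_hierarchy P tt M t = 1 \<longleftrightarrow>
    betti0 (mcf P (scale_index tt M t)) = card (P (scale_index tt M t))"
proof -
  have "card (P (scale_index tt M t)) > 0"
    using assms by (auto simp: card_gt_0_iff is_partition_iff_partition_on finite_elements
      dest: partition_onD1)
  then show ?thesis
    unfolding persistent_hierarchy_def Let_def by auto
qed

theorem corollary1:
  fixes X :: "'a set" and M :: nat and tt :: "nat \<Rightarrow> real"
    and P :: "nat \<Rightarrow> 'a set set"
  assumes "finite X" and "X \<noteq> {}" and "M \<ge> 1"
    and "\<And>i j. 1 \<le> i \<Longrightarrow> i < j \<Longrightarrow> j \<le> M \<Longrightarrow> tt i < tt j"
    and "\<And>m. 1 \<le> m \<Longrightarrow> m \<le> M \<Longrightarrow> is_partition X (P m)"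
  shows "(\<forall>t. t \<ge> tt 1 \<longrightarrow> persistent_hierarchy P tt M t = 1) \<longleftrightarrow>
         (\<forall>m. 1 \<le> m \<longrightarrow> m < M \<longrightarrow> refines (P m) (P (Suc m)))"
proof -
  have part: "is_partition X (P n)" if "n \<in> {1..M}" for n
    using assms(5) that by simp
  have "strict_mono_on {1..M} tt"
    by (rule strict_mono_onI) (use assms(4) in auto)
  then have scale_indices: "scale_index tt M ` {tt 1..} = {1..M}"
    by (rule scale_index_image[OF \<open>M \<ge> 1\<close>])
  have h_eq_1: "persistent_hierarchy P tt M t = 1 \<longleftrightarrow>
      betti0 (mcf P (scale_index tt M t)) = card (P (scale_index tt M t))" if "t \<in> {tt 1..}" for t
  proof -
    have "scale_index tt M t \<in> {1..M}" using that scale_indices by blast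
    then show ?thesis by (rule persistent_hierarchy_eq_1_iff[OF \<open>finite X\<close> \<open>X \<noteq> {}\<close> part])
  qed
  have "(\<forall>t. t \<ge> tt 1 \<longrightarrow> persistent_hierarchy P tt M t = 1) \<longleftrightarrow>
        (\<forall>n\<in>scale_index tt M ` {tt 1..}. betti0 (mcf P n) = card (P n))"
    using h_eq_1 by auto
  also have "\<dots> \<longleftrightarrow> (\<forall>n\<in>{1..M}. \<forall>l\<in>{1..n}. refines (P l) (P n))"
    unfolding scale_indices using betti0_mcf_eq_card_iff[OF \<open>finite X\<close>] part by simp
  also have "\<dots> \<longleftrightarrow> (\<forall>m. 1 \<le> m \<longrightarrow> m < M \<longrightarrow> refines (P m) (P (Suc m)))"
    by (rule refines_chain_iff[symmetric])
  finally show ?thesis .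
qed

end
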